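(* Let $(X,T)$ be a minimal Cantor system which is topologically conjugate via $\varphi:X\to U$ to the induced system $(U,T_U)$, where $U\subsetneq X$ is clopen. Then for every $k\ge0$, the restriction $\varphi|_{\varphi^k(X)}$ is a conjugacy from the induced system $(\varphi^k(X),T_{\varphi^k(X)})$ to the induced system $(\varphi^{k+1}(X),T_{\varphi^{k+1}(X)})$. In particular $(X,T)$ and $(\varphi^k(X),T_{\varphi^k(X)})$ are conjugate by $\varphi^k$.
   Context: A minimal Cantor system is a pair $(X,T)$, $X$ a Cantor set, $T$ a homeomorphism with all orbits dense. For a clopen $V\subset X$, $r_V(x)=\inf\{n>0:T^nx\in V\}$ and the induced map is $T_V:V\to V$, $T_V(x)=T^{r_V(x)}(x)$. *)

theory Defs
  imports "HOL-Analysis.Analysis"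
begin

definition cantor_set :: "'a::metric_space set \<Rightarrow> bool" where
  "cantor_set X \<longleftrightarrow> X \<noteq> {} \<and> compact X \<and> (\<forall>x\<in>X. x islimpt X)
     \<and> (\<forall>x\<in>X. connected_component_set X x = {x})"

definition orbit :: "'a set \<Rightarrow> ('a \<Rightarrow> 'a) \<Rightarrow> 'a \<Rightarrow> 'a set" where
  "orbit X T x = {(T ^^ n) x | n. True} \<union> {(the_inv_into X T ^^ n) x | n. True}"

definition minimal_cantor_system :: "'a::metric_space set \<Rightarrow> ('a \<Rightarrow> 'a) \<Rightarrow> bool" where
  "minimal_cantor_system X T \<longleftrightarrow> cantor_set X \<and> (\<exists>g. homeomorphism X X T g)
     \<and> (\<forall>x\<in>X. X \<subseteq> closure (orbit X T x))"

definition clopen_in :: "'a::topological_space set \<Rightarrow> 'a set \<Rightarrow> bool" where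
  "clopen_in X V \<longleftrightarrow> openin (top_of_set X) V \<and> closedin (top_of_set X) V"

definition return_time :: "('a \<Rightarrow> 'a) \<Rightarrow> 'a set \<Rightarrow> 'a \<Rightarrow> nat" where
  "return_time T V x = (LEAST n. n > 0 \<and> (T ^^ n) x \<in> V)"

definition induced_map :: "('a \<Rightarrow> 'a) \<Rightarrow> 'a set \<Rightarrow> 'a \<Rightarrow> 'a" where
  "induced_map T V x = (T ^^ return_time T V x) x"

definition conjugacy :: "('a::topological_space \<Rightarrow> 'b::topological_space) \<Rightarrow> 'a set \<Rightarrow> ('a \<Rightarrow> 'a)
     \<Rightarrow> 'b set \<Rightarrow> ('b \<Rightarrow> 'b) \<Rightarrow> bool" where
  "conjugacy \<phi> A S B R \<longleftrightarrow> (\<exists>\<psi>. homeomorphism A B \<phi> \<psi>) \<and> (\<forall>x\<in>A. \<phi> (S x) = R (\<phi> x))"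

end

theory Submission
  imports Defs
begin

text \<open>Minimality and compactness make every point of \<open>X\<close> return to every nonempty open
  subset of \<open>X\<close>, so all the induced maps below are defined. Inducing
  is transitive: inducing \<open>T\<close> on \<open>U\<close> and then \<open>T\<^sub>U\<close> on \<open>B \<subseteq> U\<close> gives \<open>T\<^sub>B\<close>. Hence a conjugacy
  \<open>\<phi>\<close> from \<open>(X,T)\<close> to \<open>(U,T\<^sub>U)\<close> carries the induced system on any open \<open>A \<subseteq> X\<close> to the
  system induced by \<open>T\<^sub>U\<close>, i.e. by \<open>T\<close>, on \<open>\<phi>(A)\<close>. Applying this to \<open>A = \<phi>\<^sup>k(X)\<close>, which
  stays open since \<open>U\<close> is, and composing gives the theorem.\<close>

lemma funpow_image_subset: "f ` X \<subseteq> X \<Longrightarrow> (f ^^ n) ` X \<subseteq> X"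
  by (induction n) auto

lemma continuous_on_funpow:
  assumes "continuous_on X f" "f ` X \<subseteq> X"
  shows "continuous_on X (f ^^ n)"
proof (induction n)
  case (Suc n)
  then show ?case
    using assms funpow_image_subset[OF assms(2), of n]
    by (auto intro: continuous_on_compose2)
qed simp

lemma funpow_the_inv_into_homeomorphism:
  assumes "homeomorphism X X T g" "z \<in> X"
  shows "(the_inv_into X T ^^ n) z = (g ^^ n) z"
proof -
  have "inj_on T X"
    using assms(1) by (metis homeomorphism_def inj_on_inverseI)
  moreover have "g w \<in> X" "T (g w) = w" if "w \<in> X" for w
    using assms(1) that by (auto simp: homeomorphism_def)
  ultimately have inv: "the_inv_into X T w = g w" if "w \<in> X" for w
    using that by (metis the_inv_into_f_f)
  have "(g ^^ m) z \<in> X" for m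
    using funpow_image_subset[of g X m] assms by (auto simp: homeomorphism_def)
  then show ?thesis
    by (induction n) (auto simp: inv)
qed

lemma funpow_left_inverse:
  assumes "\<forall>z\<in>X. g (T z) = z" "T ` X \<subseteq> X" "z \<in> X" "m \<le> n"
  shows "(g ^^ m) ((T ^^ n) z) = (T ^^ (n - m)) z"
  using assms(4)
proof (induction m)
  case (Suc m)
  have "(T ^^ (n - Suc m)) z \<in> X"
    using funpow_image_subset[OF assms(2)] assms(3) by blast
  moreover have "(T ^^ (n - m)) z = T ((T ^^ (n - Suc m)) z)"
    using Suc.prems by (metis Suc_diff_Suc Suc_le_lessD funpow.simps(2) o_apply)
  ultimately show ?case
    using Suc assms(1) by simp
qed simp

lemma compact_openin_nat_cover_bounded:
  fixes C :: "nat \<Rightarrow> 'a::topological_space set"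
  assumes "compact S" "\<And>n. openin (top_of_set S) (C n)" "S \<subseteq> (\<Union>n. C n)"
  obtains N where "S \<subseteq> (\<Union>n<N. C n)"
proof -
  obtain F where F: "F \<subseteq> range C" "finite F" "S \<subseteq> \<Union>F"
    using assms unfolding compact_eq_openin_cover by (metis rangeE)
  obtain I where "F = C ` I" "finite I"
    using finite_subset_image[OF F(2,1)] by blast
  moreover obtain N :: nat where "I \<subseteq> {..<N}"
    using finite_nat_bounded[OF \<open>finite I\<close>] by blast
  ultimately have "\<Union>F \<subseteq> (\<Union>n<N. C n)"
    by auto
  with F(3) show thesis
    using that by (meson order_trans)
qed

text \<open>The preimages of \<open>V\<close> under \<open>T\<^sup>n\<close> and \<open>T\<^sup>-\<^sup>n\<close> cover \<open>X\<close> by density of the orbits, so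
  finitely many with \<open>n < N\<close> do; the point \<open>T\<^sup>N x\<close> then lies in one of them.\<close>

lemma minimal_returns_to_open:
  assumes hom: "homeomorphism X X T g"
    and dense: "\<forall>x\<in>X. X \<subseteq> closure (orbit X T x)" and "compact X"
    and V: "openin (top_of_set X) V" "V \<noteq> {}" and x: "x \<in> X"
  shows "\<exists>n>0. (T ^^ n) x \<in> V"
proof -
  have TX: "T ` X \<subseteq> X" and gX: "g ` X \<subseteq> X" and gT: "\<forall>z\<in>X. g (T z) = z"
    and cont: "continuous_on X T" "continuous_on X g"
    using hom by (auto simp: homeomorphism_def)
  define C where "C n = (X \<inter> (T ^^ n) -` V) \<union> (X \<inter> (g ^^ n) -` V)" for n
  have "openin (top_of_set X) (X \<inter> (f ^^ n) -` V)"
    if "continuous_on X f" "f ` X \<subseteq> X" for f n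
    using continuous_openin_preimage[OF continuous_on_funpow[OF that] _ V(1)]
      funpow_image_subset[OF that(2)] by blast
  then have "openin (top_of_set X) (C n)" for n
    unfolding C_def using cont TX gX by blast
  moreover have "X \<subseteq> (\<Union>n. C n)"
  proof
    fix z assume z: "z \<in> X"
    obtain W where W: "open W" "V = X \<inter> W"
      using V(1) by (auto simp: openin_open)
    have "W \<inter> orbit X T z \<noteq> {}"
      using V(2) W dense z open_Int_closure_eq_empty[OF W(1)] by blast
    then obtain n where "(T ^^ n) z \<in> W \<or> (g ^^ n) z \<in> W"
      unfolding orbit_def by (auto simp: funpow_the_inv_into_homeomorphism[OF hom z])
    moreover have "(T ^^ n) z \<in> X" "(g ^^ n) z \<in> X"
      using z funpow_image_subset[OF TX] funpow_image_subset[OF gX] by blast+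
    ultimately show "z \<in> (\<Union>n. C n)"
      using W z unfolding C_def by blast
  qed
  ultimately obtain N where N: "X \<subseteq> (\<Union>n<N. C n)"
    using compact_openin_nat_cover_bounded \<open>compact X\<close> by metis
  have "(T ^^ N) x \<in> X"
    using funpow_image_subset[OF TX] x by blast
  then obtain n where n: "n < N" "(T ^^ n) ((T ^^ N) x) \<in> V \<or> (g ^^ n) ((T ^^ N) x) \<in> V"
    using N by (auto simp: C_def)
  then show ?thesis
  proof (elim disjE)
    assume "(T ^^ n) ((T ^^ N) x) \<in> V"
    then show ?thesis
      using n(1) by (intro exI[of _ "n + N"]) (simp add: funpow_add)
  next
    assume "(g ^^ n) ((T ^^ N) x) \<in> V"
    then show ?thesis
      using n(1) funpow_left_inverse[OF gT TX x, of n N] by (intro exI[of _ "N - n"]) simp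
  qed
qed

lemma return_time_returns:
  assumes "\<exists>n>0. (T ^^ n) x \<in> V"
  shows "0 < return_time T V x" and "induced_map T V x \<in> V"
  using LeastI_ex[OF assms] by (auto simp: return_time_def induced_map_def)

lemma not_in_before_return_time:
  "0 < n \<Longrightarrow> n < return_time T V x \<Longrightarrow> (T ^^ n) x \<notin> V"
  unfolding return_time_def using not_less_Least by blast

lemma induced_map_whole:
  assumes "T x \<in> X"
  shows "induced_map T X x = T x"
proof -
  have "return_time T X x = 1"
    unfolding return_time_def by (rule Least_equality) (use assms in auto)
  then show ?thesis
    by (simp add: induced_map_def)
qed

definition nth_return_time :: "('a \<Rightarrow> 'a) \<Rightarrow> 'a set \<Rightarrow> 'a \<Rightarrow> nat \<Rightarrow> nat" where
  "nth_return_time T U y j = (\<Sum>i<j. return_time T U ((induced_map T U ^^ i) y))"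

text \<open>Not usable as a simp rule: \<open>nth_return_time\<close> on the right unfolds to instances of the left.\<close>

lemma funpow_induced_map:
  "(induced_map T U ^^ j) y = (T ^^ nth_return_time T U y j) y"
proof (induction j)
  case (Suc j)
  let ?z = "(induced_map T U ^^ j) y"
  have "(induced_map T U ^^ Suc j) y = (T ^^ return_time T U ?z) ?z"
    by (simp add: induced_map_def)
  also have "\<dots> = (T ^^ (return_time T U ?z + nth_return_time T U y j)) y"
    by (simp add: Suc funpow_add)
  finally show ?case
    by (simp add: nth_return_time_def add.commute)
qed (simp add: nth_return_time_def)

lemma funpow_induced_map_in:
  assumes "\<forall>z\<in>U. \<exists>n>0. (T ^^ n) z \<in> U" "y \<in> U"
  shows "(induced_map T U ^^ j) y \<in> U"
proof (induction j)
  case (Suc j)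
  then have "\<exists>n>0. (T ^^ n) ((induced_map T U ^^ j) y) \<in> U"
    using assms(1) by blast
  then show ?case
    by (simp add: return_time_returns(2))
qed (simp add: assms(2))

lemma strict_mono_nth_return_time:
  assumes "\<forall>z\<in>U. \<exists>n>0. (T ^^ n) z \<in> U" "y \<in> U"
  shows "strict_mono (nth_return_time T U y)"
  unfolding strict_mono_Suc_iff
proof
  fix j
  have "(induced_map T U ^^ j) y \<in> U"
    using funpow_induced_map_in[OF assms] .
  then have "\<exists>n>0. (T ^^ n) ((induced_map T U ^^ j) y) \<in> U"
    using assms(1) by blast
  then have "0 < return_time T U ((induced_map T U ^^ j) y)"
    by (rule return_time_returns(1))
  then show "nth_return_time T U y j < nth_return_time T U y (Suc j)"
    by (simp add: nth_return_time_def)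
qed

lemma strict_mono_interval:
  fixes s :: "nat \<Rightarrow> nat"
  assumes "strict_mono s" "s 0 = 0"
  shows "\<exists>j. s j \<le> n \<and> n < s (Suc j)"
proof (induction n)
  case 0
  then show ?case
    using assms strict_mono_less[OF assms(1), of 0 1] by auto
next
  case (Suc n)
  then obtain j where j: "s j \<le> n" "n < s (Suc j)" by blast
  show ?case
  proof (cases "Suc n < s (Suc j)")
    case False
    then have "s (Suc j) = Suc n" using j by simp
    moreover have "s (Suc j) < s (Suc (Suc j))"
      using strict_mono_less[OF assms(1)] by blast
    ultimately show ?thesis
      by (metis order_refl)
  next
    case True
    then show ?thesis
      using j by (intro exI[of _ j]) simp
  qed
qed

lemma returns_at_nth_return_time:
  assumes rec: "\<forall>z\<in>U. \<exists>n>0. (T ^^ n) z \<in> U" and y: "y \<in> U"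
    and n: "0 < n" "(T ^^ n) y \<in> U"
  shows "\<exists>j>0. n = nth_return_time T U y j"
proof -
  let ?s = "nth_return_time T U y"
  obtain j where j: "?s j \<le> n" "n < ?s (Suc j)"
    using strict_mono_interval[OF strict_mono_nth_return_time[OF rec y]]
    by (auto simp: nth_return_time_def)
  have "n = ?s j"
  proof (rule ccontr)
    assume "n \<noteq> ?s j"
    then have "0 < n - ?s j" "n - ?s j < return_time T U ((induced_map T U ^^ j) y)"
      using j by (auto simp: nth_return_time_def)
    then have "(T ^^ (n - ?s j)) ((induced_map T U ^^ j) y) \<notin> U"
      by (rule not_in_before_return_time)
    moreover have "(T ^^ (n - ?s j)) ((T ^^ ?s j) y) = (T ^^ n) y"
      using j(1) by (metis comp_apply funpow_add le_add_diff_inverse2)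
    ultimately show False
      using n(2) funpow_induced_map[where T=T and U=U and y=y and j=j] by simp
  qed
  moreover have "?s 0 = 0"
    by (simp add: nth_return_time_def)
  then have "j \<noteq> 0"
    using \<open>n = ?s j\<close> n(1) by (cases j) auto
  ultimately show ?thesis by blast
qed

lemma induced_map_of_induced_map:
  assumes rec: "\<forall>z\<in>U. \<exists>n>0. (T ^^ n) z \<in> U" and y: "y \<in> U" and "B \<subseteq> U"
    and m: "0 < m" "(induced_map T U ^^ m) y \<in> B"
    and first: "\<forall>j. 0 < j \<and> j < m \<longrightarrow> (induced_map T U ^^ j) y \<notin> B"
  shows "induced_map T B y = (induced_map T U ^^ m) y"
proof -
  let ?s = "nth_return_time T U y"
  have mono: "strict_mono ?s"
    using strict_mono_nth_return_time[OF rec y] .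
  have "return_time T B y = ?s m"
    unfolding return_time_def
  proof (rule Least_equality)
    have "?s 0 = 0"
      by (simp add: nth_return_time_def)
    then show "0 < ?s m \<and> (T ^^ ?s m) y \<in> B"
      using m strict_mono_less[OF mono, of 0 m]
        funpow_induced_map[where T=T and U=U and y=y and j=m] by simp
  next
    fix n assume n: "0 < n \<and> (T ^^ n) y \<in> B"
    then obtain j where "0 < j" "n = ?s j"
      using returns_at_nth_return_time[OF rec y] \<open>B \<subseteq> U\<close> by blast
    moreover have "\<not> j < m"
      using first n \<open>0 < j\<close> \<open>n = ?s j\<close>
        funpow_induced_map[where T=T and U=U and y=y and j=j] by auto
    ultimately show "?s m \<le> n"
      using strict_mono_less_eq[OF mono] by simp
  qed
  then show ?thesis
    by (simp add: induced_map_def funpow_induced_map[where T=T and U=U and y=y and j=m])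
qed

lemma conjugacy_funpow:
  assumes "conjugacy \<phi> A S B R" "S ` A \<subseteq> A" "x \<in> A"
  shows "\<phi> ((S ^^ n) x) = (R ^^ n) (\<phi> x)"
proof (induction n)
  case (Suc n)
  have "(S ^^ n) x \<in> A"
    using funpow_image_subset[OF assms(2), of n] assms(3) by blast
  then show ?case
    using Suc assms(1) by (simp add: conjugacy_def)
qed simp

lemma conjugacy_comp:
  assumes "conjugacy f A S B R" "conjugacy h B R C Q"
  shows "conjugacy (h \<circ> f) A S C Q"
proof -
  obtain f' h' where "homeomorphism A B f f'" "homeomorphism B C h h'"
    using assms by (auto simp: conjugacy_def)
  moreover have "f ` A \<subseteq> B"
    using calculation(1) by (simp add: homeomorphism_def)
  ultimately show ?thesis
    using assms homeomorphism_compose unfolding conjugacy_def by fastforce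
qed

lemma conjugacy_id_induced_whole:
  "T ` X \<subseteq> X \<Longrightarrow> conjugacy id X T X (induced_map T X)"
  unfolding conjugacy_def
  using homeomorphism_ident[of X] by (auto simp: induced_map_whole id_def)

text \<open>The first return of \<open>x\<close> to \<open>A\<close> at time \<open>r\<close> becomes, under \<open>\<phi>\<close>, the first return of
  \<open>\<phi> x\<close> to \<open>\<phi>(A)\<close> under \<open>T\<^sub>U\<close> after \<open>r\<close> steps; by transitivity of inducing this is \<open>T\<^bsub>\<phi>(A)\<^esub> (\<phi> x)\<close>.\<close>

lemma conjugacy_induced:
  assumes conj: "conjugacy \<phi> X T U (induced_map T U)" and TX: "T ` X \<subseteq> X" and "U \<subseteq> X"
    and recU: "\<forall>z\<in>U. \<exists>n>0. (T ^^ n) z \<in> U"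
    and "A \<subseteq> X" and recA: "\<forall>x\<in>A. \<exists>n>0. (T ^^ n) x \<in> A"
  shows "conjugacy \<phi> A (induced_map T A) (\<phi> ` A) (induced_map T (\<phi> ` A))"
proof -
  obtain \<psi> where hom: "homeomorphism X U \<phi> \<psi>"
    using conj by (auto simp: conjugacy_def)
  have "\<phi> (induced_map T A x) = induced_map T (\<phi> ` A) (\<phi> x)" if x: "x \<in> A" for x
  proof -
    let ?r = "return_time T A x"
    have xX: "x \<in> X" using x \<open>A \<subseteq> X\<close> by blast
    have ret: "\<exists>n>0. (T ^^ n) x \<in> A" using recA x by blast
    have inj: "inj_on \<phi> X"
      using hom unfolding homeomorphism_def by (metis inj_on_inverseI)
    have orbit: "\<phi> ((T ^^ n) x) = (induced_map T U ^^ n) (\<phi> x)" for n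
      using conjugacy_funpow[OF conj TX xX] .
    have "induced_map T (\<phi> ` A) (\<phi> x) = (induced_map T U ^^ ?r) (\<phi> x)"
    proof (rule induced_map_of_induced_map[OF recU])
      show "\<phi> x \<in> U" "\<phi> ` A \<subseteq> U"
        using hom xX \<open>A \<subseteq> X\<close> by (auto simp: homeomorphism_def)
      show "0 < ?r"
        using return_time_returns(1)[OF ret] .
      have "(T ^^ ?r) x \<in> A"
        using return_time_returns(2)[OF ret] unfolding induced_map_def .
      then show "(induced_map T U ^^ ?r) (\<phi> x) \<in> \<phi> ` A"
        unfolding orbit[symmetric] by blast
      show "\<forall>j. 0 < j \<and> j < ?r \<longrightarrow> (induced_map T U ^^ j) (\<phi> x) \<notin> \<phi> ` A"
      proof (intro allI impI)
        fix j assume "0 < j \<and> j < ?r"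
        then have "(T ^^ j) x \<notin> A"
          by (simp add: not_in_before_return_time)
        moreover have "(T ^^ j) x \<in> X"
          using funpow_image_subset[OF TX] xX by blast
        ultimately show "(induced_map T U ^^ j) (\<phi> x) \<notin> \<phi> ` A"
          using inj_on_image_mem_iff[OF inj _ \<open>A \<subseteq> X\<close>] by (simp add: orbit[symmetric])
      qed
    qed
    then show ?thesis
      using orbit[of ?r] unfolding induced_map_def[of T A x] by simp
  qed
  moreover have "\<exists>\<psi>. homeomorphism A (\<phi> ` A) \<phi> \<psi>"
    using homeomorphism_of_subsets[OF hom \<open>A \<subseteq> X\<close>] hom \<open>A \<subseteq> X\<close>
    by (metis homeomorphism_def image_mono order_refl)
  ultimately show ?thesis
    by (simp add: conjugacy_def)
qed

lemma conjugacy_iterate: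
  assumes "\<And>k. conjugacy \<phi> (A k) (S k) (A (Suc k)) (S (Suc k))"
  shows "conjugacy (\<phi> ^^ k) (A 0) (S 0) (A k) (S k)"
proof (induction k)
  case 0
  show ?case
    unfolding conjugacy_def funpow_0 id_def using homeomorphism_ident by blast
next
  case (Suc k)
  show ?case
    using conjugacy_comp[OF Suc assms] by (simp only: funpow.simps(2))
qed

lemma openin_funpow_image_homeomorphism:
  assumes "homeomorphism X U \<phi> \<psi>" "openin (top_of_set X) U"
  shows "openin (top_of_set X) ((\<phi> ^^ k) ` X)"
proof (induction k)
  case (Suc k)
  then show ?case
    using homeomorphism_imp_open_map[OF assms(1) Suc] assms(2) openin_trans
    by (simp add: image_comp)
qed simp

theorem mainTheorem10:
  fixes X U :: "'a::metric_space set" and T \<phi> :: "'a \<Rightarrow> 'a"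
  assumes "minimal_cantor_system X T"
    and "clopen_in X U" and "U \<subset> X"
    and "conjugacy \<phi> X T U (induced_map T U)"
  shows "\<forall>k::nat. conjugacy \<phi> ((\<phi> ^^ k) ` X) (induced_map T ((\<phi> ^^ k) ` X))
                          ((\<phi> ^^ Suc k) ` X) (induced_map T ((\<phi> ^^ Suc k) ` X))
              \<and> conjugacy (\<phi> ^^ k) X T ((\<phi> ^^ k) ` X) (induced_map T ((\<phi> ^^ k) ` X))"
proof -
  obtain g where hom: "homeomorphism X X T g" and "cantor_set X"
    and dense: "\<forall>x\<in>X. X \<subseteq> closure (orbit X T x)"
    using assms(1) unfolding minimal_cantor_system_def by blast
  then have "compact X" "X \<noteq> {}"
    by (auto simp: cantor_set_def)
  obtain \<psi> where hom\<phi>: "homeomorphism X U \<phi> \<psi>"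
    using assms(4) unfolding conjugacy_def by blast
  have TX: "T ` X \<subseteq> X" and UX: "U \<subseteq> X" and Uo: "openin (top_of_set X) U"
    using hom assms(2,3) by (auto simp: homeomorphism_def clopen_in_def)
  have returns: "\<forall>z\<in>V. \<exists>n>0. (T ^^ n) z \<in> V" if "openin (top_of_set X) V" "V \<noteq> {}" for V
    using minimal_returns_to_open[OF hom dense \<open>compact X\<close> that] openin_imp_subset[OF that(1)] by blast
  note iterate_open = openin_funpow_image_homeomorphism[OF hom\<phi> Uo]
  have "U \<noteq> {}"
    using hom\<phi> \<open>X \<noteq> {}\<close> by (auto simp: homeomorphism_def)
  have step: "conjugacy \<phi> ((\<phi> ^^ k) ` X) (induced_map T ((\<phi> ^^ k) ` X))
                 ((\<phi> ^^ Suc k) ` X) (induced_map T ((\<phi> ^^ Suc k) ` X))" for k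
  proof -
    have "(\<phi> ^^ k) ` X \<subseteq> X" "(\<phi> ^^ k) ` X \<noteq> {}"
      using openin_imp_subset[OF iterate_open] \<open>X \<noteq> {}\<close> by auto
    then have "conjugacy \<phi> ((\<phi> ^^ k) ` X) (induced_map T ((\<phi> ^^ k) ` X))
                 (\<phi> ` (\<phi> ^^ k) ` X) (induced_map T (\<phi> ` (\<phi> ^^ k) ` X))"
      using conjugacy_induced[OF assms(4) TX UX returns[OF Uo \<open>U \<noteq> {}\<close>]]
        returns[OF iterate_open] by blast
    then show ?thesis
      by (simp add: image_comp)
  qed
  have "conjugacy (\<phi> ^^ k) X (induced_map T X) ((\<phi> ^^ k) ` X) (induced_map T ((\<phi> ^^ k) ` X))"
    for k
    using conjugacy_iterate[where A = "\<lambda>k. (\<phi> ^^ k) ` X" and S = "\<lambda>k. induced_map T ((\<phi> ^^ k) ` X)",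
        OF step] by simp
  then have "conjugacy (\<phi> ^^ k) X T ((\<phi> ^^ k) ` X) (induced_map T ((\<phi> ^^ k) ` X))" for k
    using conjugacy_comp[OF conjugacy_id_induced_whole[OF TX]] by (metis comp_id)
  with step show ?thesis by blast
qed

end
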